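(* There is $m_0$ such that for every $m\ge m_0$ that is a power of $2$ and every function $f:\{0,1\}^N\to\{0,1\}$, $$C^{dt}_\oplus(f\circ\mathrm{IND}_m^N)\ge C^{dt}(f)\quad\text{and}\quad \mathrm{size}^{dt}_\oplus(f\circ\mathrm{IND}_m^N)\ge 2^{C^{dt}(f)}\ge\mathrm{size}^{dt}(f).$$
   Context: Let $m=2^\ell$. The function $f\circ\mathrm{IND}_m^N$ has Boolean input variables $x_{i,j'}$ ($i\in[N]$, $0\le j'<\ell$) and $y_{i,j}$ ($i\in[N]$, $0\le j<m$), and its value is $f(z)$ where $z_i=y_{i,x_i}$ and $x_i\in\{0,\dots,m-1\}$ is the number with binary representation $x_{i,\ell-1}\cdots x_{i,0}$. A parity decision tree is a rooted binary tree whose internal nodes are labeled by parities ($\mathbb{F}_2$-sums) of input variables, with out-edges labeled $0,1$, and whose leaves are labeled by outputs. $C^{dt}(f)$ and $\mathrm{size}^{dt}(f)$ are the minimum height and minimum number of leaves of an ordinary decision tree (querying single variables) computing $f$; $C^{dt}_\oplus$ and $\mathrm{size}^{dt}_\oplus$ are the corresponding measures for parity decision trees. *)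

theory Defs
  imports Main
begin

text \<open>An internal node queries the
parity (sum over GF(2)) of the variables in a finite set S; edge 0 leads to the first
subtree, edge 1 to the second.
An ordinary decision tree is a parity decision tree all of whose queries are singletons.\<close>

datatype 'v pdt = Leaf bool | Node "'v set" "'v pdt" "'v pdt"

fun parity :: "'v set \<Rightarrow> ('v \<Rightarrow> bool) \<Rightarrow> bool" where
  "parity S x = odd (card {v \<in> S. x v})"

fun eval_pdt :: "'v pdt \<Rightarrow> ('v \<Rightarrow> bool) \<Rightarrow> bool" where
  "eval_pdt (Leaf b) x = b"
| "eval_pdt (Node S t0 t1) x = (if parity S x then eval_pdt t1 x else eval_pdt t0 x)"

fun height :: "'v pdt \<Rightarrow> nat" where
  "height (Leaf b) = 0"
| "height (Node S t0 t1) = Suc (max (height t0) (height t1))"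

fun leaves :: "'v pdt \<Rightarrow> nat" where
  "leaves (Leaf b) = 1"
| "leaves (Node S t0 t1) = leaves t0 + leaves t1"

fun is_pdt :: "'v set \<Rightarrow> 'v pdt \<Rightarrow> bool" where
  "is_pdt V (Leaf b) = True"
| "is_pdt V (Node S t0 t1) = (finite S \<and> S \<subseteq> V \<and> is_pdt V t0 \<and> is_pdt V t1)"

fun is_dt :: "'v set \<Rightarrow> 'v pdt \<Rightarrow> bool" where
  "is_dt V (Leaf b) = True"
| "is_dt V (Node S t0 t1) = ((\<exists>v\<in>V. S = {v}) \<and> is_dt V t0 \<and> is_dt V t1)"

text \<open>A Boolean function g on the Boolean cube {0,1}^V is represented as a function on
assignments 'v \<Rightarrow> bool; only assignments vanishing outside V matter.\<close>
definition computes :: "'v set \<Rightarrow> 'v pdt \<Rightarrow> (('v \<Rightarrow> bool) \<Rightarrow> bool) \<Rightarrow> bool" where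
  "computes V t g \<longleftrightarrow> (\<forall>x. (\<forall>v. v \<notin> V \<longrightarrow> \<not> x v) \<longrightarrow> eval_pdt t x = g x)"

definition C_dt :: "'v set \<Rightarrow> (('v \<Rightarrow> bool) \<Rightarrow> bool) \<Rightarrow> nat" where
  "C_dt V g = (LEAST h. \<exists>t. is_dt V t \<and> computes V t g \<and> height t = h)"

definition size_dt :: "'v set \<Rightarrow> (('v \<Rightarrow> bool) \<Rightarrow> bool) \<Rightarrow> nat" where
  "size_dt V g = (LEAST s. \<exists>t. is_dt V t \<and> computes V t g \<and> leaves t = s)"

definition C_pdt :: "'v set \<Rightarrow> (('v \<Rightarrow> bool) \<Rightarrow> bool) \<Rightarrow> nat" where
  "C_pdt V g = (LEAST h. \<exists>t. is_pdt V t \<and> computes V t g \<and> height t = h)"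

definition size_pdt :: "'v set \<Rightarrow> (('v \<Rightarrow> bool) \<Rightarrow> bool) \<Rightarrow> nat" where
  "size_pdt V g = (LEAST s. \<exists>t. is_pdt V t \<and> computes V t g \<and> leaves t = s)"

definition cube_vars :: "nat \<Rightarrow> nat set" where
  "cube_vars N = {..<N}"

text \<open>Variables of f \<circ> IND_m^N with m = 2^l: XV i j' (address bits) and YV i j (data bits).\<close>
datatype ivar = XV nat nat | YV nat nat

definition ind_vars :: "nat \<Rightarrow> nat \<Rightarrow> ivar set" where
  "ind_vars N l = {XV i j' | i j'. i < N \<and> j' < l} \<union> {YV i j | i j. i < N \<and> j < 2 ^ l}"

definition addr :: "nat \<Rightarrow> (ivar \<Rightarrow> bool) \<Rightarrow> nat \<Rightarrow> nat" where
  "addr l w i = (\<Sum>j'<l. if w (XV i j') then 2 ^ j' else 0)"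

definition compose_IND :: "((nat \<Rightarrow> bool) \<Rightarrow> bool) \<Rightarrow> nat \<Rightarrow> nat \<Rightarrow> (ivar \<Rightarrow> bool) \<Rightarrow> bool" where
  "compose_IND f N l w = f (\<lambda>i. if i < N then w (YV i (addr l w i)) else False)"

end

theory Submission
  imports Defs
begin

text \<open>The indexing gadget with \<open>m \<ge> 2\<close> is stifled by every single variable: for any
  variable \<open>v\<close> of a block and any bit \<open>c\<close>, the other variables of the block can be set so that
  the block outputs \<open>c\<close> whatever the value of \<open>v\<close>. An adversary walks down a parity decision
  tree for \<open>f \<circ> IND\<close>, keeping an affine subspace of inputs on which the blocks outside a
  set \<open>B\<close> are stifled to constants \<open>\<rho>\<close> while the variables of the blocks in \<open>B\<close> are free
  coordinates. At a query, either the parity is constant on the subspace, or flipping some free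
  variable \<open>v\<close> flips it; then the block \<open>i\<close> of \<open>v\<close> is stifled to \<open>c\<close> and \<open>v\<close> is solved for so
  that the query gets the answer \<open>b\<close>. Doing this for both \<open>c\<close> and both \<open>b\<close> yields a decision
  tree for \<open>f\<close> that queries \<open>x\<^sub>i\<close> and continues, for each \<open>c\<close>, with the shallower of
  the two trees obtained for \<open>b = 0, 1\<close>. Hence \<open>2 ^ depth \<le> leaves\<close>, which gives both lower
  bounds with \<open>m\<^sub>0 = 2\<close>.\<close>

section \<open>Affine functions over GF(2)\<close>

definition xor3 :: "('a \<Rightarrow> bool) \<Rightarrow> ('a \<Rightarrow> bool) \<Rightarrow> ('a \<Rightarrow> bool) \<Rightarrow> 'a \<Rightarrow> bool" where
  "xor3 r s t = (\<lambda>u. r u \<noteq> (s u \<noteq> t u))"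

text \<open>Over GF(2) the affine combinations of points are exactly the sums \<open>r + s + t\<close>,
  so this characterises the affine functions.\<close>
definition gf2_affine :: "(('a \<Rightarrow> bool) \<Rightarrow> bool) \<Rightarrow> bool" where
  "gf2_affine h \<longleftrightarrow> (\<forall>r s t. h (xor3 r s t) = (h r \<noteq> (h s \<noteq> h t)))"

definition gf2_affine_map :: "(('a \<Rightarrow> bool) \<Rightarrow> 'b \<Rightarrow> bool) \<Rightarrow> bool" where
  "gf2_affine_map \<phi> \<longleftrightarrow> (\<forall>u. gf2_affine (\<lambda>r. \<phi> r u))"

lemma gf2_affine_const: "gf2_affine (\<lambda>r. c)"
  unfolding gf2_affine_def by auto

lemma gf2_affine_coord: "gf2_affine (\<lambda>r. r u)"
  unfolding gf2_affine_def xor3_def by auto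

lemma gf2_affine_xor: "gf2_affine h \<Longrightarrow> gf2_affine k \<Longrightarrow> gf2_affine (\<lambda>r. h r \<noteq> k r)"
  unfolding gf2_affine_def by auto

lemma gf2_affine_map_xor3: "gf2_affine_map \<phi> \<Longrightarrow> \<phi> (xor3 r s t) = xor3 (\<phi> r) (\<phi> s) (\<phi> t)"
  unfolding gf2_affine_map_def gf2_affine_def xor3_def by auto

lemma gf2_affine_comp: "gf2_affine h \<Longrightarrow> gf2_affine_map \<phi> \<Longrightarrow> gf2_affine (\<lambda>r. h (\<phi> r))"
  unfolding gf2_affine_def by (simp add: gf2_affine_map_xor3)

lemma gf2_affine_map_comp:
  "gf2_affine_map \<psi> \<Longrightarrow> gf2_affine_map \<phi> \<Longrightarrow> gf2_affine_map (\<lambda>r. \<psi> (\<phi> r))"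
  using gf2_affine_comp[of "\<lambda>r. \<psi> r _" \<phi>] unfolding gf2_affine_map_def by blast

lemma gf2_affine_map_override: "gf2_affine_map (\<lambda>r u. if P u then g u else r u)"
  unfolding gf2_affine_map_def
proof
  fix u
  show "gf2_affine (\<lambda>r. if P u then g u else r u)"
    by (cases "P u") (simp_all add: gf2_affine_const gf2_affine_coord)
qed

lemma parity_singleton [simp]: "parity {v} x = x v"
proof -
  have "{u \<in> {v}. x u} = (if x v then {v} else {})" by auto
  then show ?thesis by simp
qed

declare parity.simps [simp del]

lemma parity_xor:
  assumes "finite {v \<in> S. a v}" "finite {v \<in> S. b v}"
  shows "parity S (\<lambda>v. a v \<noteq> b v) = (parity S a \<noteq> parity S b)"
proof -
  let ?A = "{v \<in> S. a v}" and ?B = "{v \<in> S. b v}"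
  have "{v \<in> S. a v \<noteq> b v} = (?A - ?B) \<union> (?B - ?A)" by auto
  then have "card {v \<in> S. a v \<noteq> b v} = card (?A - ?B) + card (?B - ?A)"
    using assms by (simp add: card_Un_disjoint Diff_Int_distrib2)
  moreover have "card ?A = card (?A - ?B) + card (?A \<inter> ?B)"
    using card_Int_Diff[OF assms(1), of ?B] by linarith
  moreover have "card ?B = card (?B - ?A) + card (?A \<inter> ?B)"
    using card_Int_Diff[OF assms(2), of ?A] by (simp add: Int_commute)
  ultimately show ?thesis by (auto simp: parity.simps)
qed

lemma gf2_affine_parity:
  assumes "gf2_affine_map \<phi>" "finite V" "\<And>r u. u \<notin> V \<Longrightarrow> \<not> \<phi> r u"
  shows "gf2_affine (\<lambda>r. parity S (\<phi> r))"
  unfolding gf2_affine_def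
proof (intro allI)
  fix r s t
  have finite_support: "finite {v \<in> S. P v}" if "\<And>v. P v \<Longrightarrow> v \<in> V" for P
    using assms(2) that by (auto intro: finite_subset)
  have fin: "finite {v \<in> S. \<phi> x v}" for x
    using assms(3) by (intro finite_support) blast
  have fin_st: "finite {v \<in> S. \<phi> s v \<noteq> \<phi> t v}"
    using assms(3) by (intro finite_support) blast
  have "parity S (\<phi> (xor3 r s t)) = parity S (\<lambda>v. \<phi> r v \<noteq> (\<phi> s v \<noteq> \<phi> t v))"
    using gf2_affine_map_xor3[OF assms(1)] by (simp add: xor3_def)
  also have "\<dots> = (parity S (\<phi> r) \<noteq> parity S (\<lambda>v. \<phi> s v \<noteq> \<phi> t v))"
    by (rule parity_xor[OF fin fin_st])
  also have "parity S (\<lambda>v. \<phi> s v \<noteq> \<phi> t v) = (parity S (\<phi> s) \<noteq> parity S (\<phi> t))"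
    by (rule parity_xor[OF fin fin])
  finally show "parity S (\<phi> (xor3 r s t)) = (parity S (\<phi> r) \<noteq> (parity S (\<phi> s) \<noteq> parity S (\<phi> t)))" .
qed

definition flip :: "'a \<Rightarrow> ('a \<Rightarrow> bool) \<Rightarrow> 'a \<Rightarrow> bool" where
  "flip v r = r(v := \<not> r v)"

lemma gf2_affine_flip_diff:
  assumes "gf2_affine q"
  shows "(q (flip v r) \<noteq> q r) = (q (flip v s) \<noteq> q s)"
proof -
  have "flip v r = xor3 r s (flip v s)"
    unfolding flip_def xor3_def by auto
  then show ?thesis
    using assms unfolding gf2_affine_def by auto
qed

lemma gf2_affine_const_or_flip:
  assumes "gf2_affine q" "finite R" "\<And>r s. (\<And>u. u \<in> R \<Longrightarrow> r u = s u) \<Longrightarrow> q r = q s"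
  shows "(\<exists>b. \<forall>r. q r = b) \<or> (\<exists>v\<in>R. \<forall>r. q (flip v r) \<noteq> q r)"
proof (rule disjCI)
  assume "\<not> (\<exists>v\<in>R. \<forall>r. q (flip v r) \<noteq> q r)"
  then have no_flip: "q (flip v r) = q r" if "v \<in> R" for v r
    using that gf2_affine_flip_diff[OF assms(1)] by blast
  have same_on_differences: "\<forall>r. {u \<in> R. r u \<noteq> s u} = D \<longrightarrow> q r = q s"
    if "finite D" for s D
    using that
  proof (induction D rule: finite_induct)
    case empty
    then show ?case using assms(3) by blast
  next
    case (insert d D)
    show ?case
    proof (intro allI impI)
      fix r assume differ: "{u \<in> R. r u \<noteq> s u} = insert d D"
      then have "{u \<in> R. flip d r u \<noteq> s u} = D"
        using insert.hyps(2) unfolding flip_def by auto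
      then have "q (flip d r) = q s" using insert.IH by blast
      moreover have "d \<in> R" using differ by blast
      ultimately show "q r = q s" using no_flip by simp
    qed
  qed
  then have "q r = q s" for r s
    using same_on_differences[of "{u \<in> R. r u \<noteq> s u}" s] assms(2) by simp
  then show "\<exists>b. \<forall>r. q r = b" by blast
qed

definition flip_to :: "(('a \<Rightarrow> bool) \<Rightarrow> bool) \<Rightarrow> 'a \<Rightarrow> bool \<Rightarrow> ('a \<Rightarrow> bool) \<Rightarrow> 'a \<Rightarrow> bool" where
  "flip_to q v b r = (if q r = b then r else flip v r)"

lemma flip_to_value: "(\<And>r. q (flip v r) \<noteq> q r) \<Longrightarrow> q (flip_to q v b r) = b"
  unfolding flip_to_def by auto

lemma flip_to_other: "u \<noteq> v \<Longrightarrow> flip_to q v b r u = r u"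
  unfolding flip_to_def flip_def by auto

lemma gf2_affine_map_flip_to:
  assumes "gf2_affine q"
  shows "gf2_affine_map (flip_to q v b)"
proof -
  have flip_to_coord:
    "(\<lambda>r. flip_to q v b r u) = (if u = v then (\<lambda>r. r v \<noteq> (q r \<noteq> b)) else (\<lambda>r. r u))" for u
    unfolding flip_to_def flip_def by (auto simp: fun_eq_iff)
  have "gf2_affine (\<lambda>r. r v \<noteq> (q r \<noteq> b))"
    by (rule gf2_affine_xor[OF gf2_affine_coord gf2_affine_xor[OF assms gf2_affine_const]])
  then show ?thesis
    unfolding gf2_affine_map_def flip_to_coord by (simp add: gf2_affine_coord)
qed

section \<open>Decision trees\<close>

lemma leaves_le_2_pow_height: "leaves t \<le> 2 ^ height t"
proof (induction t)
  case (Node S t0 t1)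
  have "leaves t0 + leaves t1 \<le> 2 ^ height t0 + 2 ^ height t1"
    using Node.IH by (rule add_mono)
  also have "\<dots> \<le> 2 * 2 ^ max (height t0) (height t1)"
    by (simp add: max_def)
  finally show ?case by simp
qed simp

lemma is_dt_eval_cong: "is_dt V t \<Longrightarrow> (\<And>v. v \<in> V \<Longrightarrow> x v = y v) \<Longrightarrow> eval_pdt t x = eval_pdt t y"
  by (induction t) auto

lemma is_dt_mono: "is_dt V t \<Longrightarrow> V \<subseteq> W \<Longrightarrow> is_dt W t"
  by (induction t) auto

lemma is_dt_imp_is_pdt: "is_dt V t \<Longrightarrow> is_pdt V t"
  by (induction t) auto

lemma computes_Node_var:
  assumes "is_dt (V - {a}) t0" "computes (V - {a}) t0 (\<lambda>x. g (x(a := False)))"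
    and "is_dt (V - {a}) t1" "computes (V - {a}) t1 (\<lambda>x. g (x(a := True)))"
  shows "computes V (Node {a} t0 t1) g"
  unfolding computes_def
proof (intro allI impI)
  fix x :: "'a \<Rightarrow> bool" assume x: "\<forall>v. v \<notin> V \<longrightarrow> \<not> x v"
  have eval_upd: "eval_pdt t x = g ((x(a := False))(a := c))"
    if "is_dt (V - {a}) t" "computes (V - {a}) t (\<lambda>x. g (x(a := c)))" for t c
  proof -
    have "eval_pdt t x = eval_pdt t (x(a := False))"
      by (rule is_dt_eval_cong[OF that(1)]) simp
    then show ?thesis using that(2) x unfolding computes_def by simp
  qed
  show "eval_pdt (Node {a} t0 t1) x = g x"
    using eval_upd[OF assms(1,2)] eval_upd[OF assms(3,4)]
    by (cases "x a") (simp_all add: fun_upd_idem)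
qed

lemma dt_exists: "finite V \<Longrightarrow> \<exists>t. is_dt V t \<and> computes V t g"
proof (induction V arbitrary: g rule: finite_induct)
  case empty
  have "computes {} (Leaf (g (\<lambda>_. False))) g"
    unfolding computes_def
  proof (intro allI impI)
    fix x :: "'a \<Rightarrow> bool" assume "\<forall>v. v \<notin> {} \<longrightarrow> \<not> x v"
    then have "x = (\<lambda>_. False)" by auto
    then show "eval_pdt (Leaf (g (\<lambda>_. False))) x = g x" by simp
  qed
  then show ?case by force
next
  case (insert a V)
  obtain t0 t1 where t0: "is_dt V t0" "computes V t0 (\<lambda>x. g (x(a := False)))"
    and t1: "is_dt V t1" "computes V t1 (\<lambda>x. g (x(a := True)))"
    using insert.IH by meson
  have "insert a V - {a} = V" using insert.hyps(2) by simp
  then have "computes (insert a V) (Node {a} t0 t1) g"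
    using t0 t1 by (intro computes_Node_var) simp_all
  moreover have "is_dt (insert a V) (Node {a} t0 t1)"
    using t0(1) t1(1) by (auto intro: is_dt_mono)
  ultimately show ?case by blast
qed

lemma C_dt_le: "is_dt V t \<Longrightarrow> computes V t g \<Longrightarrow> C_dt V g \<le> height t"
  unfolding C_dt_def by (rule Least_le) blast

lemma size_dt_le: "is_dt V t \<Longrightarrow> computes V t g \<Longrightarrow> size_dt V g \<le> leaves t"
  unfolding size_dt_def by (rule Least_le) blast

lemma C_dt_attained:
  assumes "finite V"
  shows "\<exists>t. is_dt V t \<and> computes V t g \<and> height t = C_dt V g"
proof -
  obtain t where "is_dt V t" "computes V t g" using dt_exists[OF assms] by blast
  then have "\<exists>k t. is_dt V t \<and> computes V t g \<and> height t = k" by blast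
  from LeastI_ex[OF this] show ?thesis unfolding C_dt_def .
qed

lemma C_pdt_attained:
  assumes "finite V"
  shows "\<exists>t. is_pdt V t \<and> computes V t g \<and> height t = C_pdt V g"
proof -
  obtain t where "is_pdt V t" "computes V t g"
    using dt_exists[OF assms] is_dt_imp_is_pdt by blast
  then have "\<exists>k t. is_pdt V t \<and> computes V t g \<and> height t = k" by blast
  from LeastI_ex[OF this] show ?thesis unfolding C_pdt_def .
qed

lemma size_pdt_attained:
  assumes "finite V"
  shows "\<exists>t. is_pdt V t \<and> computes V t g \<and> leaves t = size_pdt V g"
proof -
  obtain t where "is_pdt V t" "computes V t g"
    using dt_exists[OF assms] is_dt_imp_is_pdt by blast
  then have "\<exists>k t. is_pdt V t \<and> computes V t g \<and> leaves t = k" by blast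
  from LeastI_ex[OF this] show ?thesis unfolding size_pdt_def .
qed

lemma size_dt_le_2_pow_C_dt:
  assumes "finite V"
  shows "size_dt V g \<le> 2 ^ C_dt V g"
proof -
  obtain t where t: "is_dt V t" "computes V t g" "height t = C_dt V g"
    using C_dt_attained[OF assms] by blast
  have "size_dt V g \<le> leaves t" using t(1,2) by (rule size_dt_le)
  also have "\<dots> \<le> 2 ^ C_dt V g" using leaves_le_2_pow_height t(3) by metis
  finally show ?thesis .
qed

definition fix_outside :: "((nat \<Rightarrow> bool) \<Rightarrow> bool) \<Rightarrow> nat set \<Rightarrow> (nat \<Rightarrow> bool) \<Rightarrow> (nat \<Rightarrow> bool) \<Rightarrow> bool" where
  "fix_outside f B \<rho> = (\<lambda>x. f (\<lambda>i. if i \<in> B then x i else \<rho> i))"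

lemma fix_outside_upd:
  "i \<in> B \<Longrightarrow> (\<lambda>x. fix_outside f B \<rho> (x(i := c))) = fix_outside f (B - {i}) (\<rho>(i := c))"
  unfolding fix_outside_def by (intro ext arg_cong[where f = f]) auto

lemma computes_fix_outside_False:
  assumes "computes B t (fix_outside f B (\<lambda>_. False))"
  shows "computes B t f"
  unfolding computes_def
proof (intro allI impI)
  fix x :: "nat \<Rightarrow> bool" assume x: "\<forall>i. i \<notin> B \<longrightarrow> \<not> x i"
  then have "(\<lambda>i. if i \<in> B then x i else False) = x"
    by auto
  then show "eval_pdt t x = f x"
    using assms x unfolding computes_def fix_outside_def by simp
qed

lemma exists_shallower:
  fixes L0 L1 :: nat
  assumes "\<exists>t. P t \<and> 2 ^ height t \<le> L0" "\<exists>t. P t \<and> 2 ^ height t \<le> L1"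
  shows "\<exists>t. P t \<and> 2 * 2 ^ height t \<le> L0 + L1"
proof -
  obtain t0 t1 where t0: "P t0" "2 ^ height t0 \<le> L0" and t1: "P t1" "2 ^ height t1 \<le> L1"
    using assms by blast
  show ?thesis
  proof (cases "height t0 \<le> height t1")
    case True
    then have "(2::nat) ^ height t0 \<le> 2 ^ height t1" by (rule power_increasing) simp
    then show ?thesis using t0 t1(2) by (intro exI[of _ t0]) linarith
  next
    case False
    then have "(2::nat) ^ height t1 \<le> 2 ^ height t0" by (intro power_increasing) simp_all
    then show ?thesis using t1 t0(2) by (intro exI[of _ t1]) linarith
  qed
qed

lemma dt_fix_outside_split:
  fixes L :: nat
  assumes "i \<in> B"
    and "\<And>c. \<exists>t. is_dt (B - {i}) t \<and> computes (B - {i}) t (fix_outside f (B - {i}) (\<rho>(i := c)))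
                  \<and> 2 * 2 ^ height t \<le> L"
  shows "\<exists>t. is_dt B t \<and> computes B t (fix_outside f B \<rho>) \<and> 2 ^ height t \<le> L"
proof -
  obtain t0 t1 where
    t0: "is_dt (B - {i}) t0" "computes (B - {i}) t0 (fix_outside f (B - {i}) (\<rho>(i := False)))"
      "2 * 2 ^ height t0 \<le> L"
    and t1: "is_dt (B - {i}) t1" "computes (B - {i}) t1 (fix_outside f (B - {i}) (\<rho>(i := True)))"
      "2 * 2 ^ height t1 \<le> L"
    using assms(2) by meson
  have "computes B (Node {i} t0 t1) (fix_outside f B \<rho>)"
    using t0(1,2) t1(1,2) by (intro computes_Node_var) (simp_all add: fix_outside_upd[OF assms(1)])
  moreover have "is_dt B (Node {i} t0 t1)"
    using assms(1) t0(1) t1(1) by (auto intro: is_dt_mono)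
  moreover have "2 ^ height (Node {i} t0 t1) \<le> L"
    using t0(3) t1(3) by (simp add: max_def)
  ultimately show ?thesis by blast
qed

section \<open>The indexing gadget\<close>

fun block :: "ivar \<Rightarrow> nat" where
  "block (XV i j) = i"
| "block (YV i j) = i"

definition block_vars :: "nat \<Rightarrow> nat \<Rightarrow> nat set \<Rightarrow> ivar set" where
  "block_vars N l B = {u \<in> ind_vars N l. block u \<in> B}"

definition gadget_out :: "nat \<Rightarrow> (ivar \<Rightarrow> bool) \<Rightarrow> nat \<Rightarrow> bool" where
  "gadget_out l w i = w (YV i (addr l w i))"

lemma compose_IND_gadget_out:
  "compose_IND f N l w = f (\<lambda>i. if i < N then gadget_out l w i else False)"
  unfolding compose_IND_def gadget_out_def ..

lemma XV_in_ind_vars [simp]: "XV i j \<in> ind_vars N l \<longleftrightarrow> i < N \<and> j < l"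
  unfolding ind_vars_def by auto

lemma YV_in_ind_vars [simp]: "YV i j \<in> ind_vars N l \<longleftrightarrow> i < N \<and> j < 2 ^ l"
  unfolding ind_vars_def by auto

lemma finite_ind_vars: "finite (ind_vars N l)"
proof -
  have "ind_vars N l \<subseteq> (\<lambda>(i, j). XV i j) ` ({..<N} \<times> {..<l}) \<union> (\<lambda>(i, j). YV i j) ` ({..<N} \<times> {..<2 ^ l})"
    unfolding ind_vars_def by auto
  then show ?thesis by (rule finite_subset) auto
qed

lemma addr_less: "addr l w i < 2 ^ l"
proof (induction l)
  case (Suc l)
  have "addr (Suc l) w i = addr l w i + (if w (XV i l) then 2 ^ l else 0)"
    unfolding addr_def by simp
  also have "\<dots> < 2 ^ Suc l" using Suc.IH by auto
  finally show ?case .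
qed (simp add: addr_def)

lemma gadget_out_cong:
  assumes "i < N" "\<And>u. u \<in> ind_vars N l \<Longrightarrow> block u = i \<Longrightarrow> w u = w' u"
  shows "gadget_out l w i = gadget_out l w' i"
proof -
  have "addr l w i = addr l w' i"
    unfolding addr_def using assms by (intro sum.cong) auto
  moreover have "YV i (addr l w' i) \<in> ind_vars N l"
    using assms(1) addr_less by simp
  ultimately show ?thesis
    unfolding gadget_out_def using assms(2) by simp
qed

text \<open>With all data bits of block \<open>i\<close> equal to \<open>c\<close>, the address points to data bit 1
  if \<open>v\<close> is data bit 0, and to data bit 0 otherwise, so the output is \<open>c\<close> whatever \<open>v\<close> is.\<close>
definition stifler :: "bool \<Rightarrow> ivar \<Rightarrow> ivar \<Rightarrow> bool" where
  "stifler c v u = (case u of XV _ j \<Rightarrow> j = 0 \<and> v = YV (block v) 0 | YV _ _ \<Rightarrow> c)"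

lemma gadget_out_stifled:
  assumes "1 \<le> l" "block v = i" and w: "\<And>u. block u = i \<Longrightarrow> u \<noteq> v \<Longrightarrow> w u = stifler c v u"
  shows "gadget_out l w i = c"
proof -
  have "YV i (addr l w i) \<noteq> v"
  proof (cases v)
    case (YV i' j)
    have "w (XV i j') = (j' = 0 \<and> j = 0)" for j'
      using w[of "XV i j'"] YV assms(2) by (simp add: stifler_def)
    then have "addr l w i = (\<Sum>j'<l. if j' = 0 \<and> j = 0 then 1 else 0)"
      unfolding addr_def by (intro sum.cong) auto
    also have "\<dots> = (if j = 0 then 1 else 0)"
      using assms(1) by simp
    finally show ?thesis using YV by auto
  qed simp
  then show ?thesis
    unfolding gadget_out_def using w assms(2) by (simp add: stifler_def)
qed

definition stifle_block :: "bool \<Rightarrow> ivar \<Rightarrow> (ivar \<Rightarrow> bool) \<Rightarrow> ivar \<Rightarrow> bool" where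
  "stifle_block c v r = (\<lambda>u. if block u = block v then stifler c v u else r u)"

lemma gf2_affine_map_stifle_block: "gf2_affine_map (stifle_block c v)"
  unfolding stifle_block_def by (rule gf2_affine_map_override)

section \<open>The adversary\<close>

text \<open>\<open>\<phi>\<close> parametrises an affine subspace of inputs of \<open>f \<circ> IND\<close>: the variables of the
  blocks in \<open>B\<close> are free parameters, and every other block \<open>i < N\<close> is stifled to output
  \<open>\<rho> i\<close>.\<close>
locale stifling_map =
  fixes N l :: nat and B :: "nat set" and \<rho> :: "nat \<Rightarrow> bool"
    and \<phi> :: "(ivar \<Rightarrow> bool) \<Rightarrow> ivar \<Rightarrow> bool"
  assumes live_blocks: "B \<subseteq> {..<N}"
    and rho_beyond: "N \<le> i \<Longrightarrow> \<not> \<rho> i"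
    and affine: "gf2_affine_map \<phi>"
    and vanishes: "u \<notin> ind_vars N l \<Longrightarrow> \<not> \<phi> r u"
    and free: "u \<in> block_vars N l B \<Longrightarrow> \<phi> r u = r u"
    and depends_on_free: "(\<And>u. u \<in> block_vars N l B \<Longrightarrow> r u = s u) \<Longrightarrow> \<phi> r = \<phi> s"
    and stifled: "i < N \<Longrightarrow> i \<notin> B \<Longrightarrow> gadget_out l (\<phi> r) i = \<rho> i"
begin

lemma gadget_out_free:
  assumes "i \<in> B"
  shows "gadget_out l (\<phi> r) i = gadget_out l r i"
proof (rule gadget_out_cong)
  show "i < N" using assms live_blocks by auto
  show "\<phi> r u = r u" if "u \<in> ind_vars N l" "block u = i" for u
    using that assms free unfolding block_vars_def by simp
qed

lemma compose_IND_attains: "\<exists>r. compose_IND f N l (\<phi> r) = fix_outside f B \<rho> x"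
proof -
  define r where "r u = (case u of YV i _ \<Rightarrow> x i | XV _ _ \<Rightarrow> False)" for u
  have "addr l r i = 0" for i
    unfolding addr_def r_def by simp
  then have "gadget_out l (\<phi> r) i = x i" if "i \<in> B" for i
    using gadget_out_free[OF that] unfolding gadget_out_def r_def by simp
  then have "(\<lambda>i. if i < N then gadget_out l (\<phi> r) i else False) = (\<lambda>i. if i \<in> B then x i else \<rho> i)"
    using live_blocks stifled rho_beyond by (auto simp: fun_eq_iff)
  then have "compose_IND f N l (\<phi> r) = fix_outside f B \<rho> x"
    unfolding compose_IND_gadget_out fix_outside_def by (rule arg_cong)
  then show ?thesis by blast
qed

lemma computes_Leaf:
  assumes "\<And>r. compose_IND f N l (\<phi> r) = a"
  shows "computes B (Leaf a) (fix_outside f B \<rho>)"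
  unfolding computes_def
proof (intro allI impI)
  fix x :: "nat \<Rightarrow> bool"
  obtain r where "compose_IND f N l (\<phi> r) = fix_outside f B \<rho> x"
    using compose_IND_attains by blast
  then show "eval_pdt (Leaf a) x = fix_outside f B \<rho> x"
    using assms[of r] by simp
qed

lemma gf2_affine_parity_query: "gf2_affine (\<lambda>r. parity S (\<phi> r))"
  using affine finite_ind_vars vanishes by (rule gf2_affine_parity)

lemma parity_query_cong:
  "(\<And>u. u \<in> block_vars N l B \<Longrightarrow> r u = s u) \<Longrightarrow> parity S (\<phi> r) = parity S (\<phi> s)"
  using depends_on_free by metis

lemma parity_query_const_or_flip:
  "(\<exists>b. \<forall>r. parity S (\<phi> r) = b) \<or> (\<exists>v\<in>block_vars N l B. \<forall>r. parity S (\<phi> (flip v r)) \<noteq> parity S (\<phi> r))"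
proof (rule gf2_affine_const_or_flip[OF gf2_affine_parity_query])
  show "finite (block_vars N l B)"
    unfolding block_vars_def using finite_ind_vars by simp
qed (rule parity_query_cong)

text \<open>Once the block of \<open>v\<close> is stifled, \<open>v\<close> is the only one of its variables that still
  varies, and it is used to force the query \<open>q\<close> to the answer \<open>b\<close>.\<close>
lemma stifle_one_block:
  assumes "1 \<le> l" "v \<in> block_vars N l B" "gf2_affine q"
    and q_cong: "\<And>r s. (\<And>u. u \<in> block_vars N l B \<Longrightarrow> r u = s u) \<Longrightarrow> q r = q s"
  shows "stifling_map N l (B - {block v}) (\<rho>(block v := c)) (\<lambda>r. \<phi> (flip_to q v b (stifle_block c v r)))"
proof -
  let ?\<psi> = "\<lambda>r. flip_to q v b (stifle_block c v r)"
  have "block v \<in> B" "block v < N"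
    using assms(2) live_blocks unfolding block_vars_def by auto
  have \<psi>_other: "?\<psi> r u = r u" if "block u \<noteq> block v" for r u
  proof -
    have "u \<noteq> v" using that by auto
    then show ?thesis using that by (simp add: flip_to_other stifle_block_def)
  qed
  show ?thesis
  proof unfold_locales
    show "B - {block v} \<subseteq> {..<N}"
      using live_blocks by auto
    show "\<not> (\<rho>(block v := c)) j" if "N \<le> j" for j
      using that rho_beyond \<open>block v < N\<close> by auto
    show "gf2_affine_map (\<lambda>r. \<phi> (?\<psi> r))"
      using gf2_affine_map_comp[OF gf2_affine_map_flip_to[OF assms(3)] gf2_affine_map_stifle_block]
      by (rule gf2_affine_map_comp[OF affine])
    show "\<not> \<phi> (?\<psi> r) u" if "u \<notin> ind_vars N l" for r u
      using that vanishes by simp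
    show "\<phi> (?\<psi> r) u = r u" if "u \<in> block_vars N l (B - {block v})" for r u
      using that free[of u] \<psi>_other[of u] unfolding block_vars_def by auto
    show "\<phi> (?\<psi> r) = \<phi> (?\<psi> s)"
      if agree: "\<And>u. u \<in> block_vars N l (B - {block v}) \<Longrightarrow> r u = s u" for r s
    proof (rule depends_on_free)
      have stifled_agree: "stifle_block c v r u = stifle_block c v s u" if "u \<in> block_vars N l B" for u
        using that agree unfolding stifle_block_def block_vars_def by auto
      then have "q (stifle_block c v r) = q (stifle_block c v s)"
        by (rule q_cong)
      then show "?\<psi> r u = ?\<psi> s u" if "u \<in> block_vars N l B" for u
        using that stifled_agree assms(2) unfolding flip_to_def flip_def by auto
    qed
    show "gadget_out l (\<phi> (?\<psi> r)) j = (\<rho>(block v := c)) j" if "j < N" "j \<notin> B - {block v}" for r j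
    proof (cases "j = block v")
      case True
      have "gadget_out l (?\<psi> r) (block v) = c"
        using assms(1) refl by (rule gadget_out_stifled) (simp add: flip_to_other stifle_block_def)
      then show ?thesis
        using True gadget_out_free[OF \<open>block v \<in> B\<close>] by simp
    next
      case False
      then show ?thesis using that stifled by simp
    qed
  qed
qed

end

lemma dt_of_stifling_map:
  assumes "1 \<le> l" "stifling_map N l B \<rho> \<phi>" "\<And>r. eval_pdt T (\<phi> r) = compose_IND f N l (\<phi> r)"
  shows "\<exists>t. is_dt B t \<and> computes B t (fix_outside f B \<rho>) \<and> 2 ^ height t \<le> leaves T"
  using assms(2,3)
proof (induction T arbitrary: B \<rho> \<phi>)
  case (Leaf a)
  interpret stifling_map N l B \<rho> \<phi> by (rule Leaf.prems(1))
  have "computes B (Leaf a) (fix_outside f B \<rho>)"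
    using Leaf.prems(2) by (intro computes_Leaf) simp
  then show ?case by (intro exI[of _ "Leaf a"]) simp
next
  case (Node S T0 T1)
  interpret stifling_map N l B \<rho> \<phi> by (rule Node.prems(1))
  have IH: "\<exists>t. (is_dt B' t \<and> computes B' t (fix_outside f B' \<rho>')) \<and> 2 ^ height t \<le> leaves (if b then T1 else T0)"
    if "stifling_map N l B' \<rho>' \<phi>'" "\<And>r. eval_pdt (if b then T1 else T0) (\<phi>' r) = compose_IND f N l (\<phi>' r)"
    for b B' \<rho>' \<phi>'
    using that Node.IH[of B' \<rho>' \<phi>'] by (cases b) simp_all
  let ?q = "\<lambda>r. parity S (\<phi> r)"
  from parity_query_const_or_flip[of S] show ?case
  proof
    assume "\<exists>b. \<forall>r. ?q r = b"
    then obtain b where "?q r = b" for r by blast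
    then have "eval_pdt (if b then T1 else T0) (\<phi> r) = compose_IND f N l (\<phi> r)" for r
      using Node.prems(2)[of r] by (cases b) simp_all
    with Node.prems(1) obtain t where "is_dt B t" "computes B t (fix_outside f B \<rho>)"
      "2 ^ height t \<le> leaves (if b then T1 else T0)"
      by (blast dest: IH)
    moreover have "leaves (if b then T1 else T0) \<le> leaves (Node S T0 T1)"
      by simp
    ultimately show ?thesis by (meson order_trans)
  next
    assume "\<exists>v\<in>block_vars N l B. \<forall>r. ?q (flip v r) \<noteq> ?q r"
    then obtain v where v: "v \<in> block_vars N l B" "?q (flip v r) \<noteq> ?q r" for r by blast
    define P where "P c t \<longleftrightarrow> is_dt (B - {block v}) t
        \<and> computes (B - {block v}) t (fix_outside f (B - {block v}) (\<rho>(block v := c)))" for c t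
    have branch: "\<exists>t. P c t \<and> 2 ^ height t \<le> leaves (if b then T1 else T0)" for c b
    proof -
      let ?\<psi> = "\<lambda>r. flip_to ?q v b (stifle_block c v r)"
      have "stifling_map N l (B - {block v}) (\<rho>(block v := c)) (\<lambda>r. \<phi> (?\<psi> r))"
        using assms(1) v(1) gf2_affine_parity_query parity_query_cong by (rule stifle_one_block)
      moreover have "eval_pdt (if b then T1 else T0) (\<phi> (?\<psi> r)) = compose_IND f N l (\<phi> (?\<psi> r))" for r
        using Node.prems(2)[of "?\<psi> r"] flip_to_value[of ?q v b, OF v(2)] by (cases b) simp_all
      ultimately show ?thesis unfolding P_def by (rule IH)
    qed
    have "\<exists>t. P c t \<and> 2 * 2 ^ height t \<le> leaves T0 + leaves T1" for c
      using exists_shallower[OF branch[of c False] branch[of c True]] by simp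
    moreover have "block v \<in> B"
      using v(1) unfolding block_vars_def by simp
    ultimately show ?thesis
      using dt_fix_outside_split[of "block v" B f \<rho> "leaves (Node S T0 T1)"] unfolding P_def by simp
  qed
qed

lemma stifling_map_initial:
  "stifling_map N l {..<N} (\<lambda>_. False) (\<lambda>r u. u \<in> ind_vars N l \<and> r u)"
proof unfold_locales
  show "gf2_affine_map (\<lambda>r u. u \<in> ind_vars N l \<and> r u)"
    unfolding gf2_affine_map_def
  proof
    fix u
    show "gf2_affine (\<lambda>r. u \<in> ind_vars N l \<and> r u)"
      by (cases "u \<in> ind_vars N l") (simp_all add: gf2_affine_const gf2_affine_coord)
  qed
  show "(\<lambda>u. u \<in> ind_vars N l \<and> r u) = (\<lambda>u. u \<in> ind_vars N l \<and> s u)"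
    if "\<And>u. u \<in> block_vars N l {..<N} \<Longrightarrow> r u = s u" for r s
    using that unfolding block_vars_def ind_vars_def by auto
qed (auto simp: block_vars_def)

lemma two_pow_C_dt_le_leaves:
  assumes "1 \<le> l" "computes (ind_vars N l) T (compose_IND f N l)"
  shows "2 ^ C_dt (cube_vars N) f \<le> leaves T"
proof -
  have "eval_pdt T (\<lambda>u. u \<in> ind_vars N l \<and> r u) = compose_IND f N l (\<lambda>u. u \<in> ind_vars N l \<and> r u)"
    for r
    using assms(2) unfolding computes_def by simp
  then obtain t where t: "is_dt {..<N} t" "computes {..<N} t (fix_outside f {..<N} (\<lambda>_. False))"
    "2 ^ height t \<le> leaves T"
    using dt_of_stifling_map[OF assms(1) stifling_map_initial] by blast
  have "computes (cube_vars N) t f"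
    using t(2) unfolding cube_vars_def by (rule computes_fix_outside_False)
  then have "C_dt (cube_vars N) f \<le> height t"
    using t(1) unfolding cube_vars_def by (intro C_dt_le)
  then have "(2::nat) ^ C_dt (cube_vars N) f \<le> 2 ^ height t"
    by simp
  then show ?thesis using t(3) by linarith
qed

theorem theorem18:
  shows "\<exists>m0::nat. \<forall>m l N. \<forall>f :: (nat \<Rightarrow> bool) \<Rightarrow> bool.
     m = 2 ^ l \<longrightarrow> m \<ge> m0 \<longrightarrow>
       C_pdt (ind_vars N l) (compose_IND f N l) \<ge> C_dt (cube_vars N) f
     \<and> size_pdt (ind_vars N l) (compose_IND f N l) \<ge> 2 ^ C_dt (cube_vars N) f
     \<and> 2 ^ C_dt (cube_vars N) f \<ge> size_dt (cube_vars N) f"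
proof (intro exI[of _ "2::nat"] allI impI)
  fix m l N :: nat and f :: "(nat \<Rightarrow> bool) \<Rightarrow> bool"
  assume "m = 2 ^ l" "2 \<le> m"
  then have "1 \<le> l" by (cases "l = 0") simp_all
  obtain T where T: "computes (ind_vars N l) T (compose_IND f N l)"
    "height T = C_pdt (ind_vars N l) (compose_IND f N l)"
    using C_pdt_attained[OF finite_ind_vars] by blast
  obtain T' where T': "computes (ind_vars N l) T' (compose_IND f N l)"
    "leaves T' = size_pdt (ind_vars N l) (compose_IND f N l)"
    using size_pdt_attained[OF finite_ind_vars] by blast
  have "(2::nat) ^ C_dt (cube_vars N) f \<le> 2 ^ height T"
    using two_pow_C_dt_le_leaves[OF \<open>1 \<le> l\<close> T(1)] leaves_le_2_pow_height[of T] by linarith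
  then have depth: "C_dt (cube_vars N) f \<le> C_pdt (ind_vars N l) (compose_IND f N l)"
    using T(2) by simp
  have size: "2 ^ C_dt (cube_vars N) f \<le> size_pdt (ind_vars N l) (compose_IND f N l)"
    using two_pow_C_dt_le_leaves[OF \<open>1 \<le> l\<close> T'(1)] T'(2) by simp
  have "size_dt (cube_vars N) f \<le> 2 ^ C_dt (cube_vars N) f"
    by (rule size_dt_le_2_pow_C_dt) (simp add: cube_vars_def)
  with depth size show "C_pdt (ind_vars N l) (compose_IND f N l) \<ge> C_dt (cube_vars N) f
     \<and> size_pdt (ind_vars N l) (compose_IND f N l) \<ge> 2 ^ C_dt (cube_vars N) f
     \<and> 2 ^ C_dt (cube_vars N) f \<ge> size_dt (cube_vars N) f"
    by blast
qed

end
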